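(* Assume that for every $x\in V$ the functions $s\mapsto H(x,s)$ and $s\mapsto f_l(x,s)$ ($l=1,\dots,m$) are nondecreasing on $[0,\infty)$, and that $H$ is $1$-Lipschitz in $s$, i.e. $|H(x,s)-H(x,t)|\le |s-t|$ for all $x\in V$ and all $s,t\in[0,\infty)$. Then there exists a unique vector $(u^1,u^2,\dots,u^m)$ of functions $u^l:V\to\mathbb{R}$ satisfying the discrete system (S).
   Context: Let $G=(V,E)$ be a finite, connected, undirected graph with at least two vertices. For $x,y\in V$, $d(x,y)$ denotes the graph (shortest-path) distance, and $\deg(x)=|\{y\in V:(x,y)\in E\}|$. The boundary of $G$ is $$\partial G=\Big\{x\in V:\ \exists\, y\in V \text{ with } \tfrac{1}{\deg(x)}\textstyle\sum_{(x,z)\in E} d(z,y)<d(x,y)\Big\},$$ and the interior is $G^o=V\setminus\partial G$. For $r:V\to\mathbb{R}$, the mean value at $x$ is $\overline{r}(x)=\frac{1}{\deg(x)}\sum_{(x,y)\in E} r(y)$. Fix an integer $m\ge1$. Let $H:V\times[0,\infty)\to\mathbb{R}$ and $f_l:V\times[0,\infty)\to\mathbb{R}$ ($l=1,\dots,m$) be continuous in the second variable with $H(x,0)=0$ and $f_l(x,0)=0$ for all $x\in V$; they are extended to negative arguments by $H(x,s)=-H(x,-s)$ and $f_l(x,s)=-f_l(x,-s)$ for $s<0$. Let $\phi^l:\partial G\to[0,\infty)$ ($l=1,\dots,m$) be boundary data satisfying $\phi^i(x)\phi^j(x)=0$ for all $x\in\partial G$ and $i\neq j$. The discrete system (S) for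 $(u^1,\dots,u^m)$, $u^l:V\to\mathbb{R}$, is: for every $l=1,\dots,m$, $$u^l(x)=\max\Big(H\Big(x,\ \overline{u}^l(x)-\sum_{p\neq l}\overline{u}^p(x)\Big)-f_l\big(x,u^l(x)\big),\ 0\Big)\quad (x\in G^o),\qquad u^l(x)=\phi^l(x)\quad (x\in\partial G).$$ *)

theory Defs
  imports "HOL-Analysis.Analysis"
begin

definition graph_ok :: "'a set \<Rightarrow> ('a \<Rightarrow> 'a \<Rightarrow> bool) \<Rightarrow> bool" where
  "graph_ok V E \<longleftrightarrow> finite V \<and> 2 \<le> card V
     \<and> (\<forall>x y. E x y \<longrightarrow> x \<in> V \<and> y \<in> V)
     \<and> (\<forall>x y. E x y \<longrightarrow> E y x)
     \<and> (\<forall>x. \<not> E x x)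
     \<and> (\<forall>x\<in>V. \<forall>y\<in>V. (x, y) \<in> {(a, b). E a b}\<^sup>*)"

definition neighbours :: "'a set \<Rightarrow> ('a \<Rightarrow> 'a \<Rightarrow> bool) \<Rightarrow> 'a \<Rightarrow> 'a set" where
  "neighbours V E x = {y \<in> V. E x y}"

definition deg :: "'a set \<Rightarrow> ('a \<Rightarrow> 'a \<Rightarrow> bool) \<Rightarrow> 'a \<Rightarrow> nat" where
  "deg V E x = card (neighbours V E x)"

definition gdist :: "('a \<Rightarrow> 'a \<Rightarrow> bool) \<Rightarrow> 'a \<Rightarrow> 'a \<Rightarrow> nat" where
  "gdist E x y = (LEAST n. (x, y) \<in> {(a, b). E a b} ^^ n)"

definition mean_val :: "'a set \<Rightarrow> ('a \<Rightarrow> 'a \<Rightarrow> bool) \<Rightarrow> ('a \<Rightarrow> real) \<Rightarrow> 'a \<Rightarrow> real" where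
  "mean_val V E r x = (\<Sum>y\<in>neighbours V E x. r y) / real (deg V E x)"

definition boundary :: "'a set \<Rightarrow> ('a \<Rightarrow> 'a \<Rightarrow> bool) \<Rightarrow> 'a set" where
  "boundary V E = {x \<in> V. \<exists>y\<in>V.
      mean_val V E (\<lambda>z. real (gdist E z y)) x < real (gdist E x y)}"

definition graph_interior :: "'a set \<Rightarrow> ('a \<Rightarrow> 'a \<Rightarrow> bool) \<Rightarrow> 'a set" where
  "graph_interior V E = V - boundary V E"

definition solves_S :: "'a set \<Rightarrow> ('a \<Rightarrow> 'a \<Rightarrow> bool) \<Rightarrow> nat \<Rightarrow> ('a \<Rightarrow> real \<Rightarrow> real)
    \<Rightarrow> (nat \<Rightarrow> 'a \<Rightarrow> real \<Rightarrow> real) \<Rightarrow> (nat \<Rightarrow> 'a \<Rightarrow> real) \<Rightarrow> (nat \<Rightarrow> 'a \<Rightarrow> real) \<Rightarrow> bool" where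
  "solves_S V E m H f \<phi> u \<longleftrightarrow>
     (\<forall>l\<in>{1..m}.
        (\<forall>x\<in>graph_interior V E.
           u l x = max (H x (mean_val V E (u l) x - (\<Sum>p\<in>{1..m} - {l}. mean_val V E (u p) x))
                         - f l x (u l x)) 0)
      \<and> (\<forall>x\<in>boundary V E. u l x = \<phi> l x))"

end

theory Submission
  imports Defs
begin

text \<open>Solutions of (S) are the fixed points of the operator \<open>T\<close> that keeps the boundary data and,
  at an interior vertex, lets the \<open>l\<close>-th component be the solution \<open>t \<ge> 0\<close> of
  \<open>t = max (H(x, s) - f\<^sub>l(x, t), 0)\<close>, where \<open>s\<close> is the mean of \<open>u\<^sup>l\<close> minus the means of the
  other components. At an interior vertex at most one component of \<open>T u\<close> is positive, and this
  segregation makes the pointwise distance \<open>\<Sum>\<^sub>l |u\<^sup>l(x) - v\<^sup>l(x)|\<close> after one step bounded by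
  its mean over the neighbours of \<open>x\<close>, while it vanishes on the (nonempty) boundary. Following a
  walk of length \<open>j\<close> to the boundary, the distance therefore shrinks by the factor
  \<open>1 - (1/|V|)\<^sup>j\<close>, so a fixed power of \<open>T\<close> is a contraction for the maximal distance over \<open>V\<close>,
  and Banach's argument gives a unique fixed point.\<close>

section \<open>Mean values\<close>

lemma mean_val_mono:
  assumes "\<And>y. y \<in> neighbours V E x \<Longrightarrow> g y \<le> h y"
  shows "mean_val V E g x \<le> mean_val V E h x"
  unfolding mean_val_def by (rule divide_right_mono) (auto intro: sum_mono assms)

lemma mean_val_nonneg:
  assumes "\<And>y. y \<in> neighbours V E x \<Longrightarrow> 0 \<le> g y"
  shows "0 \<le> mean_val V E g x"
  unfolding mean_val_def by (auto intro!: divide_nonneg_nonneg sum_nonneg assms)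

lemma mean_val_cong:
  "(\<And>y. y \<in> neighbours V E x \<Longrightarrow> g y = h y) \<Longrightarrow> mean_val V E g x = mean_val V E h x"
  unfolding mean_val_def by (simp cong: sum.cong)

lemma mean_val_add: "mean_val V E (\<lambda>y. g y + h y) x = mean_val V E g x + mean_val V E h x"
  unfolding mean_val_def by (simp add: sum.distrib add_divide_distrib)

lemma mean_val_diff: "mean_val V E (\<lambda>y. g y - h y) x = mean_val V E g x - mean_val V E h x"
  unfolding mean_val_def by (simp add: sum_subtractf diff_divide_distrib)

lemma mean_val_sum: "mean_val V E (\<lambda>y. \<Sum>p\<in>P. g p y) x = (\<Sum>p\<in>P. mean_val V E (g p) x)"
  unfolding mean_val_def by (simp add: sum_divide_distrib[symmetric] sum.swap[of _ P])

lemma abs_mean_val_le: "\<bar>mean_val V E g x\<bar> \<le> mean_val V E (\<lambda>y. \<bar>g y\<bar>) x"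
  unfolding mean_val_def abs_divide by (auto intro: divide_right_mono sum_abs)

lemma mean_val_le_const:
  assumes "\<And>y. y \<in> neighbours V E x \<Longrightarrow> g y \<le> Q" and "0 \<le> Q"
  shows "mean_val V E g x \<le> Q"
proof -
  have "sum g (neighbours V E x) \<le> real (deg V E x) * Q"
    unfolding deg_def using sum_bounded_above[of "neighbours V E x" g Q] assms(1) by auto
  then show ?thesis
    unfolding mean_val_def using assms(2) by (cases "deg V E x = 0") (auto simp: field_simps)
qed

lemma mean_val_le_const_minus:
  assumes "finite V" and le: "\<And>y. y \<in> neighbours V E x \<Longrightarrow> g y \<le> Q"
    and y0: "y0 \<in> neighbours V E x" and "g y0 \<le> Q - e" and "0 \<le> e"
  shows "mean_val V E g x \<le> Q - e / real (card V)"
proof -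
  let ?N = "neighbours V E x"
  have fin: "finite ?N" and sub: "?N \<subseteq> V"
    using \<open>finite V\<close> by (auto simp: neighbours_def)
  have deg_pos: "0 < real (deg V E x)"
    using y0 fin unfolding deg_def by (auto simp: card_gt_0_iff)
  have deg_le: "deg V E x \<le> card V"
    unfolding deg_def by (rule card_mono[OF \<open>finite V\<close> sub])
  have "sum g ?N = g y0 + sum g (?N - {y0})"
    using sum.remove[OF fin y0] by simp
  also have "sum g (?N - {y0}) \<le> real (card (?N - {y0})) * Q"
    using sum_bounded_above[of "?N - {y0}" g Q] le by auto
  also have "real (card (?N - {y0})) = real (deg V E x) - 1"
  proof -
    have "1 \<le> card ?N" using y0 fin by (simp add: Suc_le_eq card_gt_0_iff) blast
    then show ?thesis unfolding deg_def using y0 fin by (simp add: of_nat_diff)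
  qed
  finally have "sum g ?N \<le> real (deg V E x) * Q - e"
    using \<open>g y0 \<le> Q - e\<close> by (simp add: algebra_simps)
  then have "mean_val V E g x \<le> Q - e / real (deg V E x)"
    unfolding mean_val_def using deg_pos by (simp add: field_simps)
  moreover have "e / real (card V) \<le> e / real (deg V E x)"
    using deg_le deg_pos \<open>0 \<le> e\<close> by (intro divide_left_mono) auto
  ultimately show ?thesis by linarith
qed

section \<open>Walks to the boundary\<close>

abbreviation edges :: "('a \<Rightarrow> 'a \<Rightarrow> bool) \<Rightarrow> ('a \<times> 'a) set" where
  "edges E \<equiv> {(a, b). E a b}"

lemma gdist_walk:
  assumes "graph_ok V E" "x \<in> V" "y \<in> V"
  shows "(x, y) \<in> edges E ^^ gdist E x y"
proof -
  obtain n where "(x, y) \<in> edges E ^^ n"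
    using assms rtrancl_power unfolding graph_ok_def by blast
  then show ?thesis unfolding gdist_def by (rule LeastI)
qed

lemma gdist_le: "(x, y) \<in> edges E ^^ n \<Longrightarrow> gdist E x y \<le> n"
  unfolding gdist_def by (rule Least_le)

lemma boundary_subset: "boundary V E \<subseteq> V"
  unfolding boundary_def by auto

text \<open>The first vertex of a pair at maximal distance lies on the boundary: its neighbour on a
  shortest walk is strictly closer to the second vertex, and no neighbour is farther.\<close>
lemma boundary_nonempty:
  assumes G: "graph_ok V E"
  shows "boundary V E \<noteq> {}"
proof -
  let ?d = "\<lambda>p. gdist E (fst p) (snd p)"
  have finV: "finite V" and edge_in: "\<And>x y. E x y \<Longrightarrow> x \<in> V \<and> y \<in> V"
    using G unfolding graph_ok_def by auto
  obtain a b where ab: "a \<in> V" "b \<in> V" "a \<noteq> b"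
    using G unfolding graph_ok_def by (metis card_le_Suc0_iff_eq not_less_eq_eq numeral_2_eq_2)
  obtain p where p: "p \<in> V \<times> V" and p_max: "Max (?d ` (V \<times> V)) = ?d p"
    using obtains_MAX[of "V \<times> V" ?d] finV ab by blast
  obtain x y where xy: "x \<in> V" "y \<in> V" "p = (x, y)" using p by auto
  have d_le: "gdist E a' b' \<le> gdist E x y" if "a' \<in> V" "b' \<in> V" for a' b'
  proof -
    have "?d (a', b') \<le> Max (?d ` (V \<times> V))"
      by (rule Max_ge) (use finV that in \<open>auto intro: image_eqI[where x = "(a', b')"]\<close>)
    then show ?thesis using p_max xy by simp
  qed
  have "gdist E a b \<noteq> 0"
    using gdist_walk[OF G ab(1,2)] ab(3) by (metis relpow_0_E)
  then obtain n where n: "gdist E x y = Suc n"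
    using d_le[OF ab(1,2)] by (cases "gdist E x y") auto
  then obtain z where "E x z" and zy: "(z, y) \<in> edges E ^^ n"
    using relpow_Suc_D2[of x y n "edges E"] gdist_walk[OF G xy(1,2)] by auto
  then have z: "z \<in> neighbours V E x" using edge_in unfolding neighbours_def by auto
  have "mean_val V E (\<lambda>w. real (gdist E w y)) x \<le> real (gdist E x y) - 1 / real (card V)"
  proof (rule mean_val_le_const_minus[OF finV _ z])
    show "\<And>w. w \<in> neighbours V E x \<Longrightarrow> real (gdist E w y) \<le> real (gdist E x y)"
      using d_le xy(2) by (auto simp: neighbours_def)
    show "real (gdist E z y) \<le> real (gdist E x y) - 1"
      using gdist_le[OF zy] n by simp
  qed simp
  also have "\<dots> < real (gdist E x y)"
    using ab finV by (auto simp: card_gt_0_iff)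
  finally show ?thesis using xy unfolding boundary_def by auto
qed

lemma bounded_walks_to_boundary:
  assumes G: "graph_ok V E"
  obtains J where "\<And>x. x \<in> V \<Longrightarrow> \<exists>j\<le>J. \<exists>b\<in>boundary V E. (x, b) \<in> edges E ^^ j"
proof -
  obtain b where b: "b \<in> boundary V E" using boundary_nonempty[OF G] by auto
  have "finite V" using G unfolding graph_ok_def by auto
  then have "\<exists>j\<le>Max ((\<lambda>x. gdist E x b) ` V). \<exists>b\<in>boundary V E. (x, b) \<in> edges E ^^ j"
    if "x \<in> V" for x
    using b boundary_subset[of V E] gdist_walk[OF G that, of b] \<open>finite V\<close> that
    by (intro exI[of _ "gdist E x b"] conjI bexI[of _ b]) auto
  then show ?thesis using that by blast
qed

section \<open>The scalar equation \<open>t = max (w - g t) 0\<close>\<close>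

context
  fixes h :: "real \<Rightarrow> real"
  assumes mono: "mono_on {0..} h" and zero: "h 0 = 0"
    and odd: "\<And>s. s < 0 \<Longrightarrow> h s = - h (- s)"
    and lipschitz: "\<And>s t. 0 \<le> s \<Longrightarrow> 0 \<le> t \<Longrightarrow> \<bar>h s - h t\<bar> \<le> \<bar>s - t\<bar>"
begin

private lemma nonneg_bounds: "0 \<le> s \<Longrightarrow> 0 \<le> h s \<and> h s \<le> s"
  using mono_onD[OF mono, of 0 s] lipschitz[of s 0] zero by auto

lemma odd_extension_le_max: "h s \<le> max s 0"
  using nonneg_bounds[of s] nonneg_bounds[of "- s"] odd[of s] by (cases "s < 0") auto

lemma odd_extension_lipschitz: "\<bar>h s - h t\<bar> \<le> \<bar>s - t\<bar>"
  using lipschitz[of s t] lipschitz[of "- s" "- t"] odd[of s] odd[of t]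
    nonneg_bounds[of s] nonneg_bounds[of t] nonneg_bounds[of "- s"] nonneg_bounds[of "- t"]
  by (cases "s < 0"; cases "t < 0") auto

end

lemma max_fixeq_lipschitz:
  fixes g :: "real \<Rightarrow> real"
  assumes mono: "mono_on {0..} g"
    and t: "0 \<le> t" "t = max (w - g t) 0" and t': "0 \<le> t'" "t' = max (w' - g t') 0"
  shows "\<bar>t - t'\<bar> \<le> \<bar>w - w'\<bar>"
proof (cases t t' rule: linorder_cases)
  case less
  then have "t' = w' - g t'" using t t' by (auto simp: max_def split: if_splits)
  moreover have "g t \<le> g t'" using mono_onD[OF mono, of t t'] less t by auto
  ultimately show ?thesis using less t by auto
next
  case greater
  then have "t = w - g t" using t t' by (auto simp: max_def split: if_splits)
  moreover have "g t' \<le> g t" using mono_onD[OF mono, of t' t] greater t' by auto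
  ultimately show ?thesis using greater t' by auto
qed simp

definition max_fixeq_solution :: "(real \<Rightarrow> real) \<Rightarrow> real \<Rightarrow> real" where
  "max_fixeq_solution g w = (SOME t. 0 \<le> t \<and> t = max (w - g t) 0)"

context
  fixes g :: "real \<Rightarrow> real"
  assumes cont: "continuous_on {0..} g" and mono: "mono_on {0..} g" and zero: "g 0 = 0"
begin

lemma max_fixeq_solvable: "\<exists>t. 0 \<le> t \<and> t = max (w - g t) 0"
proof (cases "w \<le> 0")
  case True
  then show ?thesis using zero by (intro exI[of _ 0]) auto
next
  case False
  have "continuous_on {0..w} (\<lambda>t. t + g t)"
    by (intro continuous_intros continuous_on_subset[OF cont]) auto
  moreover have "0 + g 0 \<le> w" "w \<le> w + g w"
    using mono_onD[OF mono, of 0 w] zero False by auto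
  ultimately obtain t where "0 \<le> t" "t \<le> w" "t + g t = w"
    using IVT'[of "\<lambda>t. t + g t" 0 w w] False by auto
  then show ?thesis by (intro exI[of _ t]) auto
qed

lemma max_fixeq_solution:
  "0 \<le> max_fixeq_solution g w" "max_fixeq_solution g w = max (w - g (max_fixeq_solution g w)) 0"
  using someI_ex[OF max_fixeq_solvable] unfolding max_fixeq_solution_def by auto

lemma max_fixeq_solution_unique:
  assumes "0 \<le> t" "t = max (w - g t) 0"
  shows "max_fixeq_solution g w = t"
  using max_fixeq_lipschitz[OF mono max_fixeq_solution assms, of w] by simp

lemma max_fixeq_solution_le: "max_fixeq_solution g w \<le> max w 0"
proof -
  have "0 \<le> g (max_fixeq_solution g w)"
    using mono_onD[OF mono, of 0 "max_fixeq_solution g w"] zero max_fixeq_solution(1) by simp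
  then show ?thesis using max_fixeq_solution(2)[of w] by linarith
qed

lemma max_fixeq_solution_lipschitz:
  "\<bar>max_fixeq_solution g w - max_fixeq_solution g w'\<bar> \<le> \<bar>w - w'\<bar>"
  by (rule max_fixeq_lipschitz[OF mono max_fixeq_solution max_fixeq_solution])

end

section \<open>Contractions for the maximal \<open>\<ell>\<^sup>1\<close> distance\<close>

definition agree_on :: "'l set \<Rightarrow> 'a set \<Rightarrow> ('l \<Rightarrow> 'a \<Rightarrow> real) \<Rightarrow> ('l \<Rightarrow> 'a \<Rightarrow> real) \<Rightarrow> bool" where
  "agree_on L V u v \<longleftrightarrow> (\<forall>l\<in>L. \<forall>x\<in>V. u l x = v l x)"

definition nonneg_on :: "'l set \<Rightarrow> 'a set \<Rightarrow> ('l \<Rightarrow> 'a \<Rightarrow> real) set" where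
  "nonneg_on L V = {u. \<forall>l\<in>L. \<forall>x\<in>V. 0 \<le> u l x}"

definition sum_dist :: "'l set \<Rightarrow> ('l \<Rightarrow> 'a \<Rightarrow> real) \<Rightarrow> ('l \<Rightarrow> 'a \<Rightarrow> real) \<Rightarrow> 'a \<Rightarrow> real" where
  "sum_dist L u v x = (\<Sum>l\<in>L. \<bar>u l x - v l x\<bar>)"

definition max_dist :: "'l set \<Rightarrow> 'a set \<Rightarrow> ('l \<Rightarrow> 'a \<Rightarrow> real) \<Rightarrow> ('l \<Rightarrow> 'a \<Rightarrow> real) \<Rightarrow> real" where
  "max_dist L V u v = Max (sum_dist L u v ` V)"

lemma agree_on_trans: "agree_on L V u v \<Longrightarrow> agree_on L V v w \<Longrightarrow> agree_on L V u w"
  unfolding agree_on_def by auto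

lemma sum_dist_nonneg: "0 \<le> sum_dist L u v x"
  unfolding sum_dist_def by (auto intro: sum_nonneg)

lemma abs_diff_le_sum_dist: "finite L \<Longrightarrow> l \<in> L \<Longrightarrow> \<bar>u l x - v l x\<bar> \<le> sum_dist L u v x"
  unfolding sum_dist_def by (rule member_le_sum) auto

lemma sum_dist_le_max_dist: "finite V \<Longrightarrow> x \<in> V \<Longrightarrow> sum_dist L u v x \<le> max_dist L V u v"
  unfolding max_dist_def by simp

lemma max_dist_nonneg: "finite V \<Longrightarrow> V \<noteq> {} \<Longrightarrow> 0 \<le> max_dist L V u v"
  using sum_dist_nonneg sum_dist_le_max_dist by (metis all_not_in_conv order.trans)

lemma max_dist_le_iff:
  "finite V \<Longrightarrow> V \<noteq> {} \<Longrightarrow> max_dist L V u v \<le> Q \<longleftrightarrow> (\<forall>x\<in>V. sum_dist L u v x \<le> Q)"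
  unfolding max_dist_def by simp

lemma agree_on_if_max_dist_le_0:
  assumes "finite L" "finite V" "max_dist L V u v \<le> 0"
  shows "agree_on L V u v"
  unfolding agree_on_def
proof (intro ballI)
  fix l x assume "l \<in> L" "x \<in> V"
  then have "\<bar>u l x - v l x\<bar> \<le> 0"
    using abs_diff_le_sum_dist sum_dist_le_max_dist assms by (meson order.trans)
  then show "u l x = v l x" by simp
qed

lemma max_dist_cong:
  "agree_on L V u u' \<Longrightarrow> agree_on L V v v' \<Longrightarrow> max_dist L V u v = max_dist L V u' v'"
  unfolding agree_on_def max_dist_def sum_dist_def by (auto intro!: arg_cong[where f = Max] sum.cong)

lemma max_dist_tendsto_0:
  assumes "finite L" "finite V" "V \<noteq> {}"
    and lim: "\<And>l x. l \<in> L \<Longrightarrow> x \<in> V \<Longrightarrow> (\<lambda>n. b n l x) \<longlonglongrightarrow> u l x"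
  shows "(\<lambda>n. max_dist L V u (b n)) \<longlonglongrightarrow> 0"
proof (rule Lim_null_comparison)
  have "(\<lambda>n. \<Sum>x\<in>V. sum_dist L u (b n) x) \<longlonglongrightarrow> (\<Sum>x\<in>V. \<Sum>l\<in>L. \<bar>u l x - u l x\<bar>)"
    unfolding sum_dist_def by (intro tendsto_intros lim)
  then show "(\<lambda>n. \<Sum>x\<in>V. sum_dist L u (b n) x) \<longlonglongrightarrow> 0" by simp
  show "\<forall>\<^sub>F n in sequentially. norm (max_dist L V u (b n)) \<le> (\<Sum>x\<in>V. sum_dist L u (b n) x)"
    using assms(2,3) by (auto simp: max_dist_le_iff max_dist_nonneg
        intro!: always_eventually member_le_sum sum_dist_nonneg)
qed

lemma convergent_if_geometric_steps:
  fixes b :: "nat \<Rightarrow> real"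
  assumes steps: "\<And>n. \<bar>b (Suc n) - b n\<bar> \<le> C * \<theta> ^ n" and "0 \<le> \<theta>" "\<theta> < 1"
  shows "convergent b"
proof -
  have "summable (\<lambda>n. C * \<theta> ^ n)"
    using assms by (intro summable_mult summable_geometric) auto
  then have "summable (\<lambda>n. b (Suc n) - b n)"
    by (rule summable_comparison_test'[of _ 0]) (use steps in auto)
  then have "convergent (\<lambda>n. b n - b 0)"
    unfolding summable_iff_convergent sum_lessThan_telescope .
  then show ?thesis by (simp add: convergent_diff_const_right_iff)
qed

locale max_dist_contraction =
  fixes L :: "'l set" and V :: "'a set" and S :: "('l \<Rightarrow> 'a \<Rightarrow> real) \<Rightarrow> 'l \<Rightarrow> 'a \<Rightarrow> real"
    and \<theta> :: real
  assumes fin: "finite L" "finite V" "V \<noteq> {}"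
    and \<theta>: "0 \<le> \<theta>" "\<theta> < 1"
    and contraction: "\<And>u v. u \<in> nonneg_on L V \<Longrightarrow> v \<in> nonneg_on L V \<Longrightarrow>
                        max_dist L V (S u) (S v) \<le> \<theta> * max_dist L V u v"
begin

lemma contraction_fixpoint_unique:
  assumes "u \<in> nonneg_on L V" "v \<in> nonneg_on L V"
    and "agree_on L V (S u) u" "agree_on L V (S v) v"
  shows "agree_on L V u v"
proof (rule agree_on_if_max_dist_le_0[OF fin(1,2)])
  have "max_dist L V u v \<le> \<theta> * max_dist L V u v"
    using contraction[OF assms(1,2)] max_dist_cong[OF assms(3,4)] by simp
  then show "max_dist L V u v \<le> 0"
    using \<theta> max_dist_nonneg[OF fin(2,3)] by (metis mult_le_cancel_right1 not_le)
qed

lemma contraction_has_fixpoint: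
  assumes invariant: "\<And>u. u \<in> nonneg_on L V \<Longrightarrow> S u \<in> nonneg_on L V"
  obtains u where "u \<in> nonneg_on L V" "agree_on L V (S u) u"
proof -
  define b where "b n = (S ^^ n) (\<lambda>_ _. 0)" for n
  have b_Suc: "b (Suc n) = S (b n)" for n
    by (simp add: b_def)
  have b_nonneg: "b n \<in> nonneg_on L V" for n
    by (induction n) (simp_all add: b_Suc invariant, simp add: b_def nonneg_on_def)
  have steps: "max_dist L V (b (Suc n)) (b n) \<le> max_dist L V (b 1) (b 0) * \<theta> ^ n" for n
  proof (induction n)
    case (Suc n)
    have "max_dist L V (b (Suc (Suc n))) (b (Suc n)) \<le> \<theta> * max_dist L V (b (Suc n)) (b n)"
      using contraction[OF b_nonneg b_nonneg, of "Suc n" n] by (simp only: b_Suc)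
    also have "\<dots> \<le> \<theta> * (max_dist L V (b 1) (b 0) * \<theta> ^ n)"
      using Suc.IH \<theta>(1) by (rule mult_left_mono)
    finally show ?case by (simp add: algebra_simps)
  qed simp
  have "convergent (\<lambda>n. b n l x)" if "l \<in> L" "x \<in> V" for l x
  proof (rule convergent_if_geometric_steps[OF _ \<theta>])
    show "\<bar>b (Suc n) l x - b n l x\<bar> \<le> max_dist L V (b 1) (b 0) * \<theta> ^ n" for n
      using abs_diff_le_sum_dist[OF fin(1) that(1)] sum_dist_le_max_dist[OF fin(2) that(2)] steps
      by (meson order.trans)
  qed
  then obtain u where lim: "\<And>l x. l \<in> L \<Longrightarrow> x \<in> V \<Longrightarrow> (\<lambda>n. b n l x) \<longlonglongrightarrow> u l x"
    unfolding convergent_def by metis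
  have u_nonneg: "u \<in> nonneg_on L V"
    using b_nonneg by (auto simp: nonneg_on_def intro: LIMSEQ_le_const[OF lim])
  have "(\<lambda>n. max_dist L V (S u) (b (Suc n))) \<longlonglongrightarrow> 0"
  proof (rule Lim_null_comparison)
    have "max_dist L V (S u) (b (Suc n)) \<le> max_dist L V u (b n)" for n
    proof -
      have "max_dist L V (S u) (b (Suc n)) \<le> \<theta> * max_dist L V u (b n)"
        unfolding b_Suc by (rule contraction[OF u_nonneg b_nonneg])
      also have "\<dots> \<le> max_dist L V u (b n)"
        using \<theta> max_dist_nonneg[OF fin(2,3)] by (intro mult_left_le_one_le) auto
      finally show ?thesis .
    qed
    then show "\<forall>\<^sub>F n in sequentially. norm (max_dist L V (S u) (b (Suc n))) \<le> max_dist L V u (b n)"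
      using max_dist_nonneg[OF fin(2,3), of L "S u"]
      by (intro always_eventually allI) (simp add: abs_of_nonneg)
    show "(\<lambda>n. max_dist L V u (b n)) \<longlonglongrightarrow> 0" by (rule max_dist_tendsto_0[OF fin lim])
  qed
  then have "(\<lambda>n. b (Suc n) l x) \<longlonglongrightarrow> S u l x" if "l \<in> L" "x \<in> V" for l x
  proof -
    have "\<bar>b (Suc n) l x - S u l x\<bar> \<le> max_dist L V (S u) (b (Suc n))" for n
      using abs_diff_le_sum_dist[OF fin(1) that(1), of "S u" x "b (Suc n)"]
        sum_dist_le_max_dist[OF fin(2) that(2), of L "S u" "b (Suc n)"] by linarith
    then have "(\<lambda>n. b (Suc n) l x - S u l x) \<longlonglongrightarrow> 0"
      by (intro Lim_null_comparison[OF _ \<open>(\<lambda>n. max_dist L V (S u) (b (Suc n))) \<longlonglongrightarrow> 0\<close>]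
          always_eventually allI) simp
    then show ?thesis by (rule LIM_zero_cancel)
  qed
  then have "agree_on L V (S u) u"
    unfolding agree_on_def using lim LIMSEQ_Suc by (blast intro: LIMSEQ_unique)
  with u_nonneg show ?thesis by (rule that)
qed

end

section \<open>The segregation operator\<close>

lemma sum_abs_diff_single_supports:
  fixes \<alpha> \<beta> :: "'l \<Rightarrow> real"
  assumes "finite L" "a \<in> L" "b \<in> L"
    and \<alpha>: "\<And>l. l \<in> L \<Longrightarrow> l \<noteq> a \<Longrightarrow> \<alpha> l = 0" and \<beta>: "\<And>l. l \<in> L \<Longrightarrow> l \<noteq> b \<Longrightarrow> \<beta> l = 0"
    and "0 \<le> \<alpha> a" "0 \<le> \<beta> b"
  shows "(\<Sum>l\<in>L. \<bar>\<alpha> l - \<beta> l\<bar>) = (if a = b then \<bar>\<alpha> a - \<beta> a\<bar> else \<alpha> a + \<beta> b)"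
proof (cases "a = b")
  case True
  have "(\<Sum>l\<in>L. \<bar>\<alpha> l - \<beta> l\<bar>) = (\<Sum>l\<in>L. if l = a then \<bar>\<alpha> a - \<beta> a\<bar> else 0)"
    using \<alpha> \<beta> True by (intro sum.cong) auto
  then show ?thesis using True assms(1,2) by simp
next
  case False
  have "(\<Sum>l\<in>L. \<bar>\<alpha> l - \<beta> l\<bar>) = (\<Sum>l\<in>L. (if l = a then \<alpha> a else 0) + (if l = b then \<beta> b else 0))"
    using \<alpha> \<beta> False assms(6,7) by (intro sum.cong) auto
  then show ?thesis using False assms(1-3) by (simp add: sum.distrib)
qed

locale segregation_system =
  fixes V :: "'a set" and E :: "'a \<Rightarrow> 'a \<Rightarrow> bool" and m :: nat
    and H :: "'a \<Rightarrow> real \<Rightarrow> real" and f :: "nat \<Rightarrow> 'a \<Rightarrow> real \<Rightarrow> real"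
    and \<phi> :: "nat \<Rightarrow> 'a \<Rightarrow> real"
  assumes G: "graph_ok V E"
    and m: "1 \<le> m"
    and f_cont: "\<And>l x. l \<in> {1..m} \<Longrightarrow> x \<in> V \<Longrightarrow> continuous_on {0..} (f l x)"
    and H0: "\<And>x. x \<in> V \<Longrightarrow> H x 0 = 0"
    and f0: "\<And>l x. l \<in> {1..m} \<Longrightarrow> x \<in> V \<Longrightarrow> f l x 0 = 0"
    and H_odd: "\<And>x s. x \<in> V \<Longrightarrow> s < 0 \<Longrightarrow> H x s = - H x (- s)"
    and phi_nonneg: "\<And>l x. l \<in> {1..m} \<Longrightarrow> x \<in> boundary V E \<Longrightarrow> 0 \<le> \<phi> l x"
    and H_mono: "\<And>x. x \<in> V \<Longrightarrow> mono_on {0..} (H x)"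
    and f_mono: "\<And>l x. l \<in> {1..m} \<Longrightarrow> x \<in> V \<Longrightarrow> mono_on {0..} (f l x)"
    and H_lip: "\<And>x s t. x \<in> V \<Longrightarrow> 0 \<le> s \<Longrightarrow> 0 \<le> t \<Longrightarrow> \<bar>H x s - H x t\<bar> \<le> \<bar>s - t\<bar>"
begin

abbreviation K :: "(nat \<Rightarrow> 'a \<Rightarrow> real) set" where
  "K \<equiv> nonneg_on {1..m} V"

abbreviation D :: "(nat \<Rightarrow> 'a \<Rightarrow> real) \<Rightarrow> (nat \<Rightarrow> 'a \<Rightarrow> real) \<Rightarrow> 'a \<Rightarrow> real" where
  "D \<equiv> sum_dist {1..m}"

definition excess :: "(nat \<Rightarrow> 'a \<Rightarrow> real) \<Rightarrow> nat \<Rightarrow> 'a \<Rightarrow> real" where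
  "excess u l y = u l y - (\<Sum>p\<in>{1..m} - {l}. u p y)"

definition T :: "(nat \<Rightarrow> 'a \<Rightarrow> real) \<Rightarrow> nat \<Rightarrow> 'a \<Rightarrow> real" where
  "T u l x = (if x \<in> boundary V E then \<phi> l x
              else max_fixeq_solution (f l x) (H x (mean_val V E (excess u l) x)))"

lemma finite_V: "finite V" and V_ne: "V \<noteq> {}"
  using G unfolding graph_ok_def by auto

lemma card_V_pos: "0 < card V"
  using finite_V V_ne by (simp add: card_gt_0_iff)

lemma neighbours_subset: "neighbours V E x \<subseteq> V"
  unfolding neighbours_def by auto

lemma mean_val_excess:
  "mean_val V E (excess u l) x = mean_val V E (u l) x - (\<Sum>p\<in>{1..m} - {l}. mean_val V E (u p) x)"
  unfolding excess_def mean_val_diff mean_val_sum ..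

lemma H_le_max: "x \<in> V \<Longrightarrow> H x s \<le> max s 0"
  by (rule odd_extension_le_max) (use H_mono H0 H_odd H_lip in auto)

lemma H_lipschitz: "x \<in> V \<Longrightarrow> \<bar>H x s - H x t\<bar> \<le> \<bar>s - t\<bar>"
  by (rule odd_extension_lipschitz) (use H_mono H0 H_odd H_lip in auto)

context
  fixes l x assumes lx: "l \<in> {1..m}" "x \<in> V"
begin

lemmas f_fixeq = max_fixeq_solution[OF f_cont[OF lx] f_mono[OF lx] f0[OF lx]]
  and f_fixeq_unique = max_fixeq_solution_unique[OF f_cont[OF lx] f_mono[OF lx] f0[OF lx]]
  and f_fixeq_le = max_fixeq_solution_le[OF f_cont[OF lx] f_mono[OF lx] f0[OF lx]]
  and f_fixeq_lipschitz = max_fixeq_solution_lipschitz[OF f_cont[OF lx] f_mono[OF lx] f0[OF lx]]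

end

lemma T_nonneg: "T u \<in> K"
  unfolding nonneg_on_def T_def using f_fixeq(1) phi_nonneg by auto

lemma T_le_mean_excess:
  assumes "l \<in> {1..m}" "x \<in> V" "x \<notin> boundary V E" "0 < T u l x"
  shows "T u l x \<le> mean_val V E (excess u l) x"
proof -
  let ?s = "mean_val V E (excess u l) x"
  have "T u l x \<le> max (H x ?s) 0"
    using assms(3) f_fixeq_le[OF assms(1,2)] unfolding T_def by simp
  then show ?thesis using H_le_max[OF assms(2), of ?s] assms(4) by linarith
qed

text \<open>Segregation: two positive components at an interior vertex would each need their own mean
  to exceed the mean of the other.\<close>
lemma T_segregated:
  assumes u: "u \<in> K" and x: "x \<in> V" "x \<notin> boundary V E"
    and ab: "a \<in> {1..m}" "b \<in> {1..m}" "a \<noteq> b" and pos: "0 < T u a x"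
  shows "T u b x = 0"
proof (rule ccontr)
  have mean_nonneg: "0 \<le> mean_val V E (u p) x" if "p \<in> {1..m}" for p
    using u that unfolding nonneg_on_def
    by (intro mean_val_nonneg) (auto dest: subsetD[OF neighbours_subset])
  assume "T u b x \<noteq> 0"
  then have pos_b: "0 < T u b x" using T_nonneg[of u] ab x unfolding nonneg_on_def by force
  have "0 < mean_val V E (excess u a) x" "0 < mean_val V E (excess u b) x"
    using T_le_mean_excess[OF ab(1) x pos] T_le_mean_excess[OF ab(2) x pos_b] pos pos_b
    by linarith+
  moreover have "mean_val V E (u b) x \<le> (\<Sum>p\<in>{1..m} - {a}. mean_val V E (u p) x)"
    and "mean_val V E (u a) x \<le> (\<Sum>p\<in>{1..m} - {b}. mean_val V E (u p) x)"
    using ab by (auto intro!: member_le_sum mean_nonneg)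
  ultimately show False unfolding mean_val_excess by linarith
qed

lemma T_single_support:
  assumes u: "u \<in> K" and x: "x \<in> V" "x \<notin> boundary V E"
  obtains a where "a \<in> {1..m}" "\<And>l. l \<in> {1..m} \<Longrightarrow> l \<noteq> a \<Longrightarrow> T u l x = 0"
proof (cases "\<exists>a\<in>{1..m}. 0 < T u a x")
  case True
  then show ?thesis using T_segregated[OF u x] that by blast
next
  case False
  then have "\<And>l. l \<in> {1..m} \<Longrightarrow> T u l x = 0"
    using T_nonneg[of u] x unfolding nonneg_on_def by force
  then show ?thesis using m that by auto
qed

lemma T_support_pair:
  assumes u: "u \<in> K" and v: "v \<in> K" and x: "x \<in> V" "x \<notin> boundary V E"
  obtains a b where "a \<in> {1..m}" "b \<in> {1..m}"
    "\<And>l. l \<in> {1..m} \<Longrightarrow> l \<noteq> a \<Longrightarrow> T u l x = 0" "\<And>l. l \<in> {1..m} \<Longrightarrow> l \<noteq> b \<Longrightarrow> T v l x = 0"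
    "a = b \<or> 0 < T u a x \<and> 0 < T v b x"
proof -
  obtain a where a: "a \<in> {1..m}" "\<And>l. l \<in> {1..m} \<Longrightarrow> l \<noteq> a \<Longrightarrow> T u l x = 0"
    using T_single_support[OF u x] by blast
  obtain b where b: "b \<in> {1..m}" "\<And>l. l \<in> {1..m} \<Longrightarrow> l \<noteq> b \<Longrightarrow> T v l x = 0"
    using T_single_support[OF v x] by blast
  have "0 \<le> T u a x" "0 \<le> T v b x"
    using T_nonneg a(1) b(1) x unfolding nonneg_on_def by auto
  then consider "T u a x = 0" | "T v b x = 0" | "0 < T u a x \<and> 0 < T v b x" by linarith
  then show ?thesis
  proof cases
    case 1
    with a(2) have "T u l x = 0" if "l \<in> {1..m}" for l
      using that by (cases "l = a") auto
    then show ?thesis using that[OF b(1) b(1) _ b(2)] by blast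
  next
    case 2
    with b(2) have "T v l x = 0" if "l \<in> {1..m}" for l
      using that by (cases "l = b") auto
    then show ?thesis using that[OF a(1) a(1) a(2)] by blast
  next
    case 3
    then show ?thesis using that[OF a(1) b(1) a(2) b(2)] by blast
  qed
qed

lemma sum_dist_split:
  "a \<in> {1..m} \<Longrightarrow> D u v y = \<bar>u a y - v a y\<bar> + (\<Sum>p\<in>{1..m} - {a}. \<bar>u p y - v p y\<bar>)"
  unfolding sum_dist_def by (rule sum.remove) auto

lemma abs_excess_diff_le: "a \<in> {1..m} \<Longrightarrow> \<bar>excess u a y - excess v a y\<bar> \<le> D u v y"
  unfolding excess_def sum_dist_split[of a u v y]
  using sum_abs[of "\<lambda>p. u p y - v p y" "{1..m} - {a}"] by (simp add: sum_subtractf)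

lemma excess_add_le:
  assumes "u \<in> K" "v \<in> K" "y \<in> V" and ab: "a \<in> {1..m}" "b \<in> {1..m}" "a \<noteq> b"
  shows "excess u a y + excess v b y \<le> D u v y"
proof -
  have "u b y \<le> (\<Sum>p\<in>{1..m} - {a}. u p y)" "v a y \<le> (\<Sum>p\<in>{1..m} - {b}. v p y)"
    using assms unfolding nonneg_on_def by (auto intro!: member_le_sum)
  moreover have "\<bar>u b y - v b y\<bar> \<le> (\<Sum>p\<in>{1..m} - {a}. \<bar>u p y - v p y\<bar>)"
    using ab by (intro member_le_sum) auto
  ultimately show ?thesis unfolding excess_def sum_dist_split[OF ab(1)] by linarith
qed

lemma T_diff_le:
  assumes x: "x \<in> V" "x \<notin> boundary V E" and a: "a \<in> {1..m}"
  shows "\<bar>T u a x - T v a x\<bar> \<le> mean_val V E (D u v) x"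
proof -
  have "\<bar>T u a x - T v a x\<bar>
      \<le> \<bar>H x (mean_val V E (excess u a) x) - H x (mean_val V E (excess v a) x)\<bar>"
    using x f_fixeq_lipschitz[OF a x(1)] unfolding T_def by simp
  also have "\<dots> \<le> \<bar>mean_val V E (\<lambda>y. excess u a y - excess v a y) x\<bar>"
    unfolding mean_val_diff by (rule H_lipschitz[OF x(1)])
  also have "\<dots> \<le> mean_val V E (\<lambda>y. \<bar>excess u a y - excess v a y\<bar>) x"
    by (rule abs_mean_val_le)
  also have "\<dots> \<le> mean_val V E (D u v) x"
    by (rule mean_val_mono) (rule abs_excess_diff_le[OF a])
  finally show ?thesis .
qed

lemma T_add_le:
  assumes u: "u \<in> K" and v: "v \<in> K" and x: "x \<in> V" "x \<notin> boundary V E"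
    and ab: "a \<in> {1..m}" "b \<in> {1..m}" "a \<noteq> b" and pos: "0 < T u a x" "0 < T v b x"
  shows "T u a x + T v b x \<le> mean_val V E (D u v) x"
proof -
  have "T u a x + T v b x \<le> mean_val V E (excess u a) x + mean_val V E (excess v b) x"
    using T_le_mean_excess[OF ab(1) x pos(1)] T_le_mean_excess[OF ab(2) x pos(2)] by linarith
  also have "\<dots> \<le> mean_val V E (D u v) x"
    unfolding mean_val_add[symmetric]
    by (rule mean_val_mono) (use excess_add_le[OF u v _ ab] neighbours_subset in blast)
  finally show ?thesis .
qed

text \<open>Here segregation enters: at an interior vertex each of \<open>T u\<close> and \<open>T v\<close> has at most one
  positive component.\<close>
lemma sum_dist_T_le:
  assumes u: "u \<in> K" and v: "v \<in> K" and x: "x \<in> V"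
  shows "D (T u) (T v) x \<le> mean_val V E (D u v) x"
proof (cases "x \<in> boundary V E")
  case True
  then show ?thesis by (simp add: sum_dist_def T_def mean_val_nonneg sum_dist_nonneg)
next
  case interior: False
  obtain a b where ab: "a \<in> {1..m}" "b \<in> {1..m}"
    and supp: "\<And>l. l \<in> {1..m} \<Longrightarrow> l \<noteq> a \<Longrightarrow> T u l x = 0"
              "\<And>l. l \<in> {1..m} \<Longrightarrow> l \<noteq> b \<Longrightarrow> T v l x = 0"
    and pos: "a = b \<or> 0 < T u a x \<and> 0 < T v b x"
    using T_support_pair[OF u v x interior] by blast
  have "0 \<le> T u a x" "0 \<le> T v b x"
    using T_nonneg ab x unfolding nonneg_on_def by auto
  then have D_eq: "D (T u) (T v) x = (if a = b then \<bar>T u a x - T v a x\<bar> else T u a x + T v b x)"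
    unfolding sum_dist_def
    using sum_abs_diff_single_supports[of "{1..m}" a b "\<lambda>l. T u l x" "\<lambda>l. T v l x"] ab supp
    by simp
  show ?thesis
  proof (cases "a = b")
    case True
    then show ?thesis using D_eq T_diff_le[OF x interior ab(1)] by simp
  next
    case False
    then show ?thesis using D_eq pos T_add_le[OF u v x interior ab False] by simp
  qed
qed

lemma T_iterate_nonneg: "u \<in> K \<Longrightarrow> (T ^^ k) u \<in> K"
  by (cases k) (simp, simp only: funpow.simps comp_apply T_nonneg)

lemma sum_dist_T_iterate_le:
  assumes u: "u \<in> K" and v: "v \<in> K" and x: "x \<in> V"
  shows "D ((T ^^ k) u) ((T ^^ k) v) x \<le> max_dist {1..m} V u v"
  using x
proof (induction k arbitrary: x)
  case 0
  then show ?case using sum_dist_le_max_dist[OF finite_V] by simp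
next
  case (Suc k)
  have "D ((T ^^ Suc k) u) ((T ^^ Suc k) v) x \<le> mean_val V E (D ((T ^^ k) u) ((T ^^ k) v)) x"
    using sum_dist_T_le[OF T_iterate_nonneg[OF u] T_iterate_nonneg[OF v] Suc.prems] by simp
  also have "\<dots> \<le> max_dist {1..m} V u v"
    using Suc.IH neighbours_subset max_dist_nonneg[OF finite_V V_ne]
    by (intro mean_val_le_const) auto
  finally show ?case .
qed

text \<open>Induction along the walk: the distance vanishes on the boundary, and a neighbour at which it
  is already small pulls the mean, hence the distance after one more step, down.\<close>
lemma sum_dist_T_iterate_near_boundary:
  assumes u: "u \<in> K" and v: "v \<in> K"
  shows "(x, b) \<in> edges E ^^ j \<Longrightarrow> b \<in> boundary V E \<Longrightarrow> x \<in> V \<Longrightarrow> j < k \<Longrightarrow>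
    D ((T ^^ k) u) ((T ^^ k) v) x \<le> (1 - (1 / real (card V)) ^ j) * max_dist {1..m} V u v"
proof (induction j arbitrary: x k)
  case 0
  then obtain k' where "k = Suc k'" by (cases k) auto
  then show ?case using 0 by (simp add: sum_dist_def T_def)
next
  case (Suc j)
  let ?Q = "max_dist {1..m} V u v" and ?c = "1 / real (card V)"
  obtain k' where k: "k = Suc k'" and j: "j < k'" using Suc.prems(4) by (cases k) auto
  have Q: "0 \<le> ?Q" by (rule max_dist_nonneg[OF finite_V V_ne])
  have c: "0 \<le> ?c" "?c \<le> 1" using card_V_pos by auto
  show ?case
  proof (cases "x \<in> boundary V E")
    case True
    have "?c ^ Suc j \<le> 1" by (rule power_le_one[OF c])
    then have "0 \<le> (1 - ?c ^ Suc j) * ?Q"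
      using Q by (intro mult_nonneg_nonneg) (simp_all del: power_Suc)
    moreover have "D ((T ^^ k) u) ((T ^^ k) v) x = 0"
      using True by (simp add: k sum_dist_def T_def)
    ultimately show ?thesis by linarith
  next
    case False
    obtain y where "E x y" and y_walk: "(y, b) \<in> edges E ^^ j"
      using relpow_Suc_D2[OF Suc.prems(1)] by auto
    then have y: "y \<in> neighbours V E x" "y \<in> V"
      using G unfolding graph_ok_def neighbours_def by auto
    let ?g = "D ((T ^^ k') u) ((T ^^ k') v)"
    have "D ((T ^^ k) u) ((T ^^ k) v) x \<le> mean_val V E ?g x"
      unfolding k using sum_dist_T_le[OF T_iterate_nonneg[OF u] T_iterate_nonneg[OF v] Suc.prems(3)]
      by simp
    also have "\<dots> \<le> ?Q - ?Q * ?c ^ j / real (card V)"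
    proof (rule mean_val_le_const_minus[OF finite_V _ y(1)])
      show "\<And>z. z \<in> neighbours V E x \<Longrightarrow> ?g z \<le> ?Q"
        using sum_dist_T_iterate_le[OF u v] neighbours_subset by blast
      show "?g y \<le> ?Q - ?Q * ?c ^ j"
        using Suc.IH[OF y_walk Suc.prems(2) y(2) j] by (simp add: algebra_simps)
      show "0 \<le> ?Q * ?c ^ j" using Q c by simp
    qed
    also have "\<dots> = (1 - ?c ^ Suc j) * ?Q" by (simp add: field_simps)
    finally show ?thesis .
  qed
qed

lemma T_iterate_contraction:
  obtains N \<theta> where "max_dist_contraction {1..m} V (T ^^ N) \<theta>"
proof -
  obtain J where walks: "\<And>x. x \<in> V \<Longrightarrow> \<exists>j\<le>J. \<exists>b\<in>boundary V E. (x, b) \<in> edges E ^^ j"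
    using bounded_walks_to_boundary[OF G] by blast
  let ?c = "1 / real (card V)"
  have c: "0 < ?c" "?c \<le> 1" using card_V_pos by auto
  have "max_dist {1..m} V ((T ^^ Suc J) u) ((T ^^ Suc J) v) \<le> (1 - ?c ^ J) * max_dist {1..m} V u v"
    if u: "u \<in> K" and v: "v \<in> K" for u v
  proof (subst max_dist_le_iff[OF finite_V V_ne], intro ballI)
    fix x assume x: "x \<in> V"
    then obtain j b where j: "j \<le> J" and b: "b \<in> boundary V E" "(x, b) \<in> edges E ^^ j"
      using walks by blast
    have "D ((T ^^ Suc J) u) ((T ^^ Suc J) v) x \<le> (1 - ?c ^ j) * max_dist {1..m} V u v"
      using j by (intro sum_dist_T_iterate_near_boundary[OF u v b(2) b(1) x]) simp
    also have "\<dots> \<le> (1 - ?c ^ J) * max_dist {1..m} V u v"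
      using power_decreasing[OF \<open>j \<le> J\<close>, of ?c] c max_dist_nonneg[OF finite_V V_ne]
      by (intro mult_right_mono) auto
    finally show "D ((T ^^ Suc J) u) ((T ^^ Suc J) v) x \<le> (1 - ?c ^ J) * max_dist {1..m} V u v" .
  qed
  moreover have "0 \<le> 1 - ?c ^ J" "1 - ?c ^ J < 1"
    using c by (auto simp: power_le_one)
  ultimately have "max_dist_contraction {1..m} V (T ^^ Suc J) (1 - ?c ^ J)"
    using finite_V V_ne by unfold_locales auto
  then show ?thesis by (rule that)
qed

lemma T_agree:
  assumes "agree_on {1..m} V u u'"
  shows "agree_on {1..m} V (T u) (T u')"
proof -
  have "mean_val V E (excess u l) x = mean_val V E (excess u' l) x" if "l \<in> {1..m}" for l x
    using assms that unfolding agree_on_def excess_def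
    by (intro mean_val_cong) (auto intro!: sum.cong dest: subsetD[OF neighbours_subset])
  then show ?thesis unfolding agree_on_def T_def by simp
qed

lemma T_iterate_fixpoint:
  assumes "agree_on {1..m} V (T u) u" shows "agree_on {1..m} V ((T ^^ k) u) u"
proof (induction k)
  case (Suc k)
  have "agree_on {1..m} V (T ((T ^^ k) u)) (T u)" by (rule T_agree[OF Suc.IH])
  then show ?case using agree_on_trans[OF _ assms] by simp
qed (simp add: agree_on_def)

lemma solution_is_fixpoint:
  assumes sol: "solves_S V E m H f \<phi> v"
  shows "v \<in> K" "agree_on {1..m} V (T v) v"
proof -
  have interior: "v l x = max (H x (mean_val V E (excess v l) x) - f l x (v l x)) 0"
    if "l \<in> {1..m}" "x \<in> V" "x \<notin> boundary V E" for l x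
    using sol that unfolding solves_S_def graph_interior_def mean_val_excess by blast
  have boundary: "v l x = \<phi> l x" if "l \<in> {1..m}" "x \<in> boundary V E" for l x
    using sol that unfolding solves_S_def by blast
  show nonneg: "v \<in> K"
    unfolding nonneg_on_def
  proof (intro CollectI ballI)
    fix l x assume "l \<in> {1..m}" "x \<in> V"
    then show "0 \<le> v l x"
      using interior[of l x] boundary[of l x] phi_nonneg[of l x]
      by (cases "x \<in> boundary V E") simp_all
  qed
  show "agree_on {1..m} V (T v) v"
    unfolding agree_on_def
  proof (intro ballI)
    fix l x assume lx: "l \<in> {1..m}" "x \<in> V"
    show "T v l x = v l x"
    proof (cases "x \<in> boundary V E")
      case True
      then show ?thesis using boundary lx unfolding T_def by simp
    next
      case False
      have "0 \<le> v l x" using nonneg lx unfolding nonneg_on_def by blast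
      then show ?thesis
        using False f_fixeq_unique[OF lx] interior[OF lx False] unfolding T_def by simp
    qed
  qed
qed

lemma fixpoint_is_solution:
  assumes fixed: "agree_on {1..m} V (T u) u"
  shows "solves_S V E m H f \<phi> u"
  unfolding solves_S_def
proof (intro ballI conjI)
  fix l x assume l: "l \<in> {1..m}" and "x \<in> graph_interior V E"
  then have x: "x \<in> V" "x \<notin> boundary V E" unfolding graph_interior_def by auto
  then have "u l x = max_fixeq_solution (f l x) (H x (mean_val V E (excess u l) x))"
    using fixed l unfolding agree_on_def T_def by force
  then show "u l x = max (H x (mean_val V E (u l) x - (\<Sum>p\<in>{1..m} - {l}. mean_val V E (u p) x))
                           - f l x (u l x)) 0"
    using f_fixeq(2)[OF l x(1)] unfolding mean_val_excess by metis
next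
  fix l x assume "l \<in> {1..m}" "x \<in> boundary V E"
  then show "u l x = \<phi> l x" using fixed boundary_subset unfolding agree_on_def T_def by force
qed

theorem unique_solution:
  "\<exists>u. solves_S V E m H f \<phi> u \<and>
     (\<forall>v. solves_S V E m H f \<phi> v \<longrightarrow> (\<forall>l\<in>{1..m}. \<forall>x\<in>V. v l x = u l x))"
proof -
  obtain N \<theta> where "max_dist_contraction {1..m} V (T ^^ N) \<theta>"
    by (rule T_iterate_contraction)
  then interpret contraction: max_dist_contraction "{1..m}" V "T ^^ N" \<theta> .
  obtain u where u: "u \<in> K" "agree_on {1..m} V ((T ^^ N) u) u"
    using contraction.contraction_has_fixpoint[OF T_iterate_nonneg] by blast
  have "agree_on {1..m} V ((T ^^ N) (T u)) (T u)"
    using T_agree[OF u(2)] by (simp add: funpow_swap1)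
  then have T_fix: "agree_on {1..m} V (T u) u"
    using contraction.contraction_fixpoint_unique[OF T_nonneg u(1) _ u(2)] by simp
  show ?thesis
  proof (intro exI conjI allI impI)
    show "solves_S V E m H f \<phi> u" by (rule fixpoint_is_solution[OF T_fix])
    fix v assume "solves_S V E m H f \<phi> v"
    note v = solution_is_fixpoint[OF this]
    show "\<forall>l\<in>{1..m}. \<forall>x\<in>V. v l x = u l x"
      using contraction.contraction_fixpoint_unique[OF v(1) u(1) T_iterate_fixpoint[OF v(2)] u(2)]
      unfolding agree_on_def .
  qed
qed

end

theorem theorem1:
  fixes V :: "'a set" and E :: "'a \<Rightarrow> 'a \<Rightarrow> bool" and m :: nat
    and H :: "'a \<Rightarrow> real \<Rightarrow> real" and f :: "nat \<Rightarrow> 'a \<Rightarrow> real \<Rightarrow> real"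
    and \<phi> :: "nat \<Rightarrow> 'a \<Rightarrow> real"
  assumes G: "graph_ok V E"
    and m: "1 \<le> m"
    and H_cont: "\<And>x. x \<in> V \<Longrightarrow> continuous_on {0..} (H x)"
    and f_cont: "\<And>l x. l \<in> {1..m} \<Longrightarrow> x \<in> V \<Longrightarrow> continuous_on {0..} (f l x)"
    and H0: "\<And>x. x \<in> V \<Longrightarrow> H x 0 = 0"
    and f0: "\<And>l x. l \<in> {1..m} \<Longrightarrow> x \<in> V \<Longrightarrow> f l x 0 = 0"
    and H_odd: "\<And>x s. x \<in> V \<Longrightarrow> s < 0 \<Longrightarrow> H x s = - H x (- s)"
    and f_odd: "\<And>l x s. l \<in> {1..m} \<Longrightarrow> x \<in> V \<Longrightarrow> s < 0 \<Longrightarrow> f l x s = - f l x (- s)"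
    and phi_nonneg: "\<And>l x. l \<in> {1..m} \<Longrightarrow> x \<in> boundary V E \<Longrightarrow> 0 \<le> \<phi> l x"
    and phi_disj: "\<And>i j x. i \<in> {1..m} \<Longrightarrow> j \<in> {1..m} \<Longrightarrow> i \<noteq> j \<Longrightarrow>
                      x \<in> boundary V E \<Longrightarrow> \<phi> i x * \<phi> j x = 0"
    and H_mono: "\<And>x. x \<in> V \<Longrightarrow> mono_on {0..} (H x)"
    and f_mono: "\<And>l x. l \<in> {1..m} \<Longrightarrow> x \<in> V \<Longrightarrow> mono_on {0..} (f l x)"
    and H_lip: "\<And>x s t. x \<in> V \<Longrightarrow> 0 \<le> s \<Longrightarrow> 0 \<le> t \<Longrightarrow> \<bar>H x s - H x t\<bar> \<le> \<bar>s - t\<bar>"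
  shows "\<exists>u. solves_S V E m H f \<phi> u \<and>
           (\<forall>v. solves_S V E m H f \<phi> v \<longrightarrow> (\<forall>l\<in>{1..m}. \<forall>x\<in>V. v l x = u l x))"
proof -
  interpret segregation_system V E m H f \<phi>
    by unfold_locales (fact G m f_cont H0 f0 H_odd phi_nonneg H_mono f_mono H_lip)+
  show ?thesis by (rule unique_solution)
qed

end
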